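(* Let $t \ge 1$ and $b \ge 0$ be integers, $T$ a finite non-empty subset of $\mathbb{Z}^b$, and $f : \mathbb{Z}^b \to \mathbb{Z}$ a function. Then there is a function $g : \mathbb{Z}^b \to \{0,\dots,t-1\}$ such that for each $x \in \mathbb{Z}^b$, $\sum_{y\in T} g(x-y) \equiv f(x) \pmod t$.
   Context: $\mathbb{Z}^0$ is the trivial group. *)

theory Defs
  imports Main "HOL-Number_Theory.Cong"
begin

text \<open>The lattice Z^b, represented as integer sequences vanishing from index b on
  (coordinates 0..b-1).\<close>
definition Zvec :: "nat \<Rightarrow> (nat \<Rightarrow> int) set" where
  "Zvec b = {x. \<forall>i\<ge>b. x i = 0}"

end

theory Submission
  imports Defs "HOL-Library.Function_Algebras"
begin

text \<open>The congruence even holds as an exact equation over \<open>\<int>\<close>, and for any finite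
  non-empty set \<open>T\<close> of translations in an abelian group that admits an additive
  \<open>\<phi>\<close> into \<open>\<int>\<close> injective on \<open>T\<close>. Let \<open>a\<close> and \<open>c\<close> be the elements of \<open>T\<close> where \<open>\<phi>\<close> is
  minimal and maximal, and set \<open>g = 0\<close> on the window \<open>0 \<le> \<phi> z < \<phi> c - \<phi> a\<close>. Above the
  window the equation at \<open>x = z + a\<close> determines \<open>g z\<close> from values of \<open>g\<close> at lower
  levels that do not drop below the window; below the window the equation at \<open>x = z + c\<close>
  determines \<open>g z\<close> from higher levels that do not rise above it. On \<open>\<int>\<^sup>b\<close> such a \<open>\<phi>\<close>
  is \<open>x \<mapsto> \<Sum>\<^sub>i x\<^sub>i M\<^sup>i\<close> for a large base \<open>M\<close>.\<close>

locale extremal_translates =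
  fixes \<phi> :: "'a::ab_group_add \<Rightarrow> int" and T :: "'a set" and a c :: 'a
  assumes diff: "\<And>x y. \<phi> (x - y) = \<phi> x - \<phi> y"
    and finite: "finite T"
    and a_in: "a \<in> T" and c_in: "c \<in> T"
    and a_least: "\<And>y. y \<in> T \<Longrightarrow> y \<noteq> a \<Longrightarrow> \<phi> a < \<phi> y"
    and c_greatest: "\<And>y. y \<in> T \<Longrightarrow> y \<noteq> c \<Longrightarrow> \<phi> y < \<phi> c"
begin

lemma add: "\<phi> (x + y) = \<phi> x + \<phi> y"
  using diff[of "x + y" y] by simp

lemma bounds: "y \<in> T \<Longrightarrow> \<phi> a \<le> \<phi> y \<and> \<phi> y \<le> \<phi> c"
  using a_least[of y] c_greatest[of y] by fastforce

definition height :: "'a \<Rightarrow> int" where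
  "height z = (if \<phi> c - \<phi> a \<le> \<phi> z then \<phi> z else if \<phi> z < 0 then - \<phi> z else 0)"

function solution :: "('a \<Rightarrow> 'b::ab_group_add) \<Rightarrow> 'a \<Rightarrow> 'b" where
  "solution f z =
     (if \<phi> c - \<phi> a \<le> \<phi> z then f (z + a) - (\<Sum>y\<in>T - {a}. solution f (z + a - y))
      else if \<phi> z < 0 then f (z + c) - (\<Sum>y\<in>T - {c}. solution f (z + c - y))
      else 0)"
  by auto
termination
proof (relation "measure (\<lambda>(f, z). nat (height z))")
  fix f :: "'a \<Rightarrow> 'b" and z y
  assume "\<phi> c - \<phi> a \<le> \<phi> z" "y \<in> T - {a}"
  with a_least[of y] bounds[of y]
  show "((f, z + a - y), f, z) \<in> measure (\<lambda>(f, z). nat (height z))"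
    by (auto simp: height_def diff add)
next
  fix f :: "'a \<Rightarrow> 'b" and z y
  assume "\<not> \<phi> c - \<phi> a \<le> \<phi> z" "\<phi> z < 0" "y \<in> T - {c}"
  with c_greatest[of y] bounds[of y]
  show "((f, z + c - y), f, z) \<in> measure (\<lambda>(f, z). nat (height z))"
    by (auto simp: height_def diff add)
qed simp

declare solution.simps [simp del]

lemma sum_translates_solution: "(\<Sum>y\<in>T. solution f (x - y)) = f x"
proof (cases "\<phi> c \<le> \<phi> x")
  case True
  then have "solution f (x - a) = f x - (\<Sum>y\<in>T - {a}. solution f (x - y))"
    by (subst solution.simps) (simp add: diff algebra_simps)
  moreover have "(\<Sum>y\<in>T. solution f (x - y)) =
      solution f (x - a) + (\<Sum>y\<in>T - {a}. solution f (x - y))"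
    by (rule sum.remove[OF finite a_in])
  ultimately show ?thesis
    by simp
next
  case False
  then have "solution f (x - c) = f x - (\<Sum>y\<in>T - {c}. solution f (x - y))"
    using bounds[OF a_in] by (subst solution.simps) (simp add: diff algebra_simps)
  moreover have "(\<Sum>y\<in>T. solution f (x - y)) =
      solution f (x - c) + (\<Sum>y\<in>T - {c}. solution f (x - y))"
    by (rule sum.remove[OF finite c_in])
  ultimately show ?thesis
    by simp
qed

end

lemma sum_translates_surjective:
  fixes \<phi> :: "'a::ab_group_add \<Rightarrow> int" and f :: "'a \<Rightarrow> 'b::ab_group_add"
  assumes diff: "\<And>x y. \<phi> (x - y) = \<phi> x - \<phi> y"
    and "finite T" "T \<noteq> {}" and inj: "inj_on \<phi> T"
  shows "\<exists>g. \<forall>x. (\<Sum>y\<in>T. g (x - y)) = f x"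
proof -
  have fin: "finite (\<phi> ` T)" and ne: "\<phi> ` T \<noteq> {}"
    using assms by auto
  obtain a where a: "a \<in> T" "\<phi> a = Min (\<phi> ` T)"
    using Min_in[OF fin ne] by auto
  obtain c where c: "c \<in> T" "\<phi> c = Max (\<phi> ` T)"
    using Max_in[OF fin ne] by auto
  have "extremal_translates \<phi> T a c"
  proof
    fix y assume "y \<in> T" "y \<noteq> a"
    then show "\<phi> a < \<phi> y"
      using a fin inj_onD[OF inj, of y a] by (metis Min_le image_eqI order_le_neq_trans)
  next
    fix y assume "y \<in> T" "y \<noteq> c"
    then show "\<phi> y < \<phi> c"
      using c fin inj_onD[OF inj, of y c] by (metis Max_ge image_eqI order_le_neq_trans)
  qed (use assms a c in auto)
  then show ?thesis
    using extremal_translates.sum_translates_solution by blast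
qed

lemma abs_sum_digits_less:
  fixes d :: "nat \<Rightarrow> int"
  assumes "\<And>i. i < n \<Longrightarrow> \<bar>d i\<bar> < M"
  shows "\<bar>\<Sum>i<n. d i * M ^ i\<bar> < M ^ n"
  using assms
proof (induction n)
  case 0
  then show ?case by simp
next
  case (Suc n)
  have "0 < M"
    using Suc.prems[of n] by linarith
  have "\<bar>\<Sum>i<Suc n. d i * M ^ i\<bar> \<le> \<bar>\<Sum>i<n. d i * M ^ i\<bar> + \<bar>d n * M ^ n\<bar>"
    by (simp add: abs_triangle_ineq)
  also have "\<dots> = \<bar>\<Sum>i<n. d i * M ^ i\<bar> + \<bar>d n\<bar> * M ^ n"
    using \<open>0 < M\<close> by (simp add: abs_mult)
  also have "\<dots> \<le> (M ^ n - 1) + (M - 1) * M ^ n"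
    using Suc by (intro add_mono mult_right_mono) auto
  finally show ?case
    by (simp add: algebra_simps)
qed

lemma sum_digits_eq_0:
  fixes d :: "nat \<Rightarrow> int"
  assumes "\<And>i. i < n \<Longrightarrow> \<bar>d i\<bar> < M" and "(\<Sum>i<n. d i * M ^ i) = 0" and "i < n"
  shows "d i = 0"
  using assms
proof (induction n)
  case 0
  then show ?case by simp
next
  case (Suc n)
  have "d n = 0"
  proof (rule ccontr)
    assume "d n \<noteq> 0"
    have "M ^ n \<le> \<bar>d n * M ^ n\<bar>"
      using \<open>d n \<noteq> 0\<close> Suc.prems(1)[of 0] by (auto simp: abs_mult)
    also have "\<dots> = \<bar>\<Sum>i<n. d i * M ^ i\<bar>"
      using Suc.prems(2) by simp
    also have "\<dots> < M ^ n"
      using Suc.prems(1) by (intro abs_sum_digits_less) auto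
    finally show False by simp
  qed
  then show ?case
    using Suc by (cases "i = n") auto
qed

lemma Zvec_injective_additive_functional:
  assumes "finite T" and "T \<subseteq> Zvec b"
  shows "\<exists>\<phi> :: (nat \<Rightarrow> int) \<Rightarrow> int. (\<forall>x y. \<phi> (x - y) = \<phi> x - \<phi> y) \<and> inj_on \<phi> T"
proof -
  define K where "K = (\<Sum>y\<in>T. \<Sum>i<b. \<bar>y i\<bar>)"
  define M where "M = 2 * K + 1"
  define \<phi> where "\<phi> x = (\<Sum>i<b. x i * M ^ i)" for x :: "nat \<Rightarrow> int"
  have diff: "\<phi> (x - y) = \<phi> x - \<phi> y" for x y
    by (simp add: \<phi>_def left_diff_distrib sum_subtractf)
  have bound: "\<bar>y i\<bar> \<le> K" if "y \<in> T" "i < b" for y i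
  proof -
    have "\<bar>y i\<bar> \<le> (\<Sum>i<b. \<bar>y i\<bar>)"
      using that by (intro member_le_sum) auto
    also have "\<dots> \<le> K"
      unfolding K_def using that assms(1) by (intro member_le_sum) auto
    finally show ?thesis .
  qed
  have "inj_on \<phi> T"
  proof (rule inj_onI)
    fix x y assume x: "x \<in> T" and y: "y \<in> T" and "\<phi> x = \<phi> y"
    then have "(\<Sum>i<b. (x i - y i) * M ^ i) = 0"
      using diff[of x y] by (simp add: \<phi>_def)
    moreover have "\<bar>x i - y i\<bar> < M" if "i < b" for i
      using bound[OF x that] bound[OF y that] unfolding M_def by arith
    ultimately have "x i = y i" if "i < b" for i
      using sum_digits_eq_0[of b "\<lambda>i. x i - y i" M i] that by auto
    moreover have "x i = y i" if "b \<le> i" for i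
      using subsetD[OF assms(2) x] subsetD[OF assms(2) y] that by (simp add: Zvec_def)
    ultimately show "x = y"
      by (meson ext not_le)
  qed
  with diff show ?thesis
    by blast
qed

theorem proposition14:
  fixes t :: int and b :: nat and T :: "(nat \<Rightarrow> int) set"
    and f :: "(nat \<Rightarrow> int) \<Rightarrow> int"
  assumes "t \<ge> 1" and "finite T" and "T \<noteq> {}" and "T \<subseteq> Zvec b"
  shows "\<exists>g :: (nat \<Rightarrow> int) \<Rightarrow> int.
           (\<forall>x\<in>Zvec b. g x \<in> {0..<t}) \<and>
           (\<forall>x\<in>Zvec b. [(\<Sum>y\<in>T. g (x - y)) = f x] (mod t))"
proof -
  obtain \<phi> :: "(nat \<Rightarrow> int) \<Rightarrow> int"
    where "\<And>x y. \<phi> (x - y) = \<phi> x - \<phi> y" and "inj_on \<phi> T"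
    using Zvec_injective_additive_functional[OF assms(2,4)] by blast
  then obtain g where g: "\<And>x. (\<Sum>y\<in>T. g (x - y)) = f x"
    using sum_translates_surjective[of \<phi> T f] assms(2,3) by blast
  show ?thesis
  proof (intro exI[of _ "\<lambda>z. g z mod t"] conjI ballI)
    fix x
    show "g x mod t \<in> {0..<t}"
      using assms(1) by simp
    have "[(\<Sum>y\<in>T. g (x - y) mod t) = (\<Sum>y\<in>T. g (x - y))] (mod t)"
      by (rule cong_sum) (simp add: cong_def)
    then show "[(\<Sum>y\<in>T. g (x - y) mod t) = f x] (mod t)"
      by (simp add: g)
  qed
qed

end
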